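(* Let $\alpha\ge1$. If all valuation functions are symmetric submodular and every item cost function is non-decreasing and $\alpha$-average-decreasing, then for every (truthfully reported) valuation profile the allocation $A$ output by IACSM satisfies $\pi(A)\le 2\alpha^3H_n\cdot\pi(A^* )$, where $A^*$ is an allocation minimizing the social cost $\pi$.
   Context: Players $N=\{1,\dots,n\}$, items $M=\{1,\dots,m\}$, non-decreasing valuations $v_i:2^M\to\mathbb{R}_{\ge0}$; symmetric: $f(S)=f(T)$ whenever $|S|=|T|$; submodular: $f(S\cup\{x\})-f(S)\ge f(T\cup\{x\})-f(T)$ for $S\subseteq T$, $x\notin T$. Item cost functions $c_j:2^N\to\mathbb{R}_{\ge0}$; $c$ is $\alpha$-average-decreasing if $\alpha\frac{c(S)}{|S|}\ge\frac{c(T)}{|T|}$ for all nonempty $S\subseteq T\subseteq N$. For an allocation $A=(A_1,\dots,A_n)$, $T_j=\{i:j\in A_i\}$ and the social cost is $\pi(A)=\sum_{j\in M}c_j(T_j)+\sum_{i\in N}(v_i(M)-v_i(A_i))$. $H_n=\sum_{k=1}^n1/k$. Mechanism IACSM (input: declared valuations $b$): maintain active set $X=N$, sets $T_j=N$ and cost shares $\chi_j=c_j(N)/n$ for all items $j$. While $X\neq\emptyset$: (1) every $i\in X$ computes $A_i\in\arg\max_{S\subseteq M}\{b_i(S)-\sum_{j\in S}\chi_j\}$, choosing among maximizers one of maximum cardinality $k$, and among those the $k$ items with smallest current $\chi_j$ (item ties by index); (2) choose $i^*\in X$ with $|A_{i^*}|$ minimum (ties by smallest index); (3) assign $A_{i^*}$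 to $i^*$ permanently and remove $i^*$ from $X$; (4) for every item $j\notin A_{i^*}$ set $T_j:=T_j\setminus\{i^*\}$ and, if $T_j\ne\emptyset$, set $\chi_j:=\max\{\chi_j,c_j(T_j)/|T_j|\}$. Output the assigned bundles and payments $p_i=\sum_{j\in A_i}\chi_j$ with final cost shares. *)

theory Defs
  imports "HOL-Analysis.Analysis"
begin

text \<open>An allocation is a function A from players to bundles (items are replicable: several
  players may receive the same item; T_j is the set of players receiving j).\<close>

definition allocation :: "nat \<Rightarrow> nat \<Rightarrow> (nat \<Rightarrow> nat set) \<Rightarrow> bool" where
  "allocation n m A \<longleftrightarrow> (\<forall>i<n. A i \<subseteq> {..<m})"

definition receivers :: "nat \<Rightarrow> (nat \<Rightarrow> nat set) \<Rightarrow> nat \<Rightarrow> nat set" where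
  "receivers n A j = {i \<in> {..<n}. j \<in> A i}"

definition social_cost ::
  "nat \<Rightarrow> nat \<Rightarrow> (nat \<Rightarrow> nat set \<Rightarrow> real) \<Rightarrow> (nat \<Rightarrow> nat set \<Rightarrow> real) \<Rightarrow> (nat \<Rightarrow> nat set) \<Rightarrow> real" where
  "social_cost n m v c A =
     (\<Sum>j<m. c j (receivers n A j)) + (\<Sum>i<n. v i {..<m} - v i (A i))"

definition non_decreasing :: "'a set \<Rightarrow> ('a set \<Rightarrow> real) \<Rightarrow> bool" where
  "non_decreasing U f \<longleftrightarrow> (\<forall>S T. S \<subseteq> T \<and> T \<subseteq> U \<longrightarrow> f S \<le> f T)"

definition symmetric_fn :: "'a set \<Rightarrow> ('a set \<Rightarrow> real) \<Rightarrow> bool" where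
  "symmetric_fn U f \<longleftrightarrow> (\<forall>S T. S \<subseteq> U \<and> T \<subseteq> U \<and> card S = card T \<longrightarrow> f S = f T)"

definition submodular :: "'a set \<Rightarrow> ('a set \<Rightarrow> real) \<Rightarrow> bool" where
  "submodular U f \<longleftrightarrow> (\<forall>S T x. S \<subseteq> T \<and> T \<subseteq> U \<and> x \<in> U \<and> x \<notin> T \<longrightarrow>
      f (insert x S) - f S \<ge> f (insert x T) - f T)"

definition avg_decreasing :: "real \<Rightarrow> 'a set \<Rightarrow> ('a set \<Rightarrow> real) \<Rightarrow> bool" where
  "avg_decreasing \<alpha> U f \<longleftrightarrow> (\<forall>S T. S \<noteq> {} \<and> S \<subseteq> T \<and> T \<subseteq> U \<longrightarrow>
      \<alpha> * (f S / card S) \<ge> f T / card T)"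

definition util :: "(nat \<Rightarrow> nat set \<Rightarrow> real) \<Rightarrow> (nat \<Rightarrow> real) \<Rightarrow> nat \<Rightarrow> nat set \<Rightarrow> real" where
  "util b sh i S = b i S - (\<Sum>j\<in>S. sh j)"

definition best_util :: "nat \<Rightarrow> (nat \<Rightarrow> nat set \<Rightarrow> real) \<Rightarrow> (nat \<Rightarrow> real) \<Rightarrow> nat \<Rightarrow> real" where
  "best_util m b sh i = Max (util b sh i ` Pow {..<m})"

definition demand_card :: "nat \<Rightarrow> (nat \<Rightarrow> nat set \<Rightarrow> real) \<Rightarrow> (nat \<Rightarrow> real) \<Rightarrow> nat \<Rightarrow> nat" where
  "demand_card m b sh i =
     Max (card ` {S \<in> Pow {..<m}. util b sh i S = best_util m b sh i})"

definition cheapest :: "nat \<Rightarrow> (nat \<Rightarrow> real) \<Rightarrow> nat \<Rightarrow> nat set" where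
  "cheapest m sh k = {j \<in> {..<m}.
      card {j' \<in> {..<m}. sh j' < sh j \<or> (sh j' = sh j \<and> j' < j)} < k}"

definition demand :: "nat \<Rightarrow> (nat \<Rightarrow> nat set \<Rightarrow> real) \<Rightarrow> (nat \<Rightarrow> real) \<Rightarrow> nat \<Rightarrow> nat set" where
  "demand m b sh i = cheapest m sh (demand_card m b sh i)"

type_synonym state = "nat set \<times> (nat \<Rightarrow> nat set) \<times> (nat \<Rightarrow> real) \<times> (nat \<Rightarrow> nat set)"
  (* active set X, sets T_j, cost shares chi_j, assigned bundles *)

definition iacsm_step ::
  "nat \<Rightarrow> (nat \<Rightarrow> nat set \<Rightarrow> real) \<Rightarrow> (nat \<Rightarrow> nat set \<Rightarrow> real) \<Rightarrow> state \<Rightarrow> state" where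
  "iacsm_step m b c st = (case st of (X, T, sh, A) \<Rightarrow>
     if X = {} then (X, T, sh, A) else
     (let istar = (LEAST i. i \<in> X \<and> (\<forall>i'\<in>X. demand_card m b sh i \<le> demand_card m b sh i'));
          D = demand m b sh istar;
          T' = (\<lambda>j. if j \<in> D then T j else T j - {istar});
          sh' = (\<lambda>j. if j \<notin> D \<and> T' j \<noteq> {}
                     then max (sh j) (c j (T' j) / real (card (T' j))) else sh j)
      in (X - {istar}, T', sh', A(istar := D))))"

definition iacsm_init :: "nat \<Rightarrow> (nat \<Rightarrow> nat set \<Rightarrow> real) \<Rightarrow> state" where
  "iacsm_init n c = ({..<n}, (\<lambda>j. {..<n}), (\<lambda>j. c j {..<n} / real n), (\<lambda>i. {}))"

text \<open>Each round removes exactly one active player, so n rounds empty X.\<close>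
definition iacsm ::
  "nat \<Rightarrow> nat \<Rightarrow> (nat \<Rightarrow> nat set \<Rightarrow> real) \<Rightarrow> (nat \<Rightarrow> nat set \<Rightarrow> real) \<Rightarrow> (nat \<Rightarrow> nat set)" where
  "iacsm n m b c = snd (snd (snd ((iacsm_step m b c ^^ n) (iacsm_init n c))))"

end

theory Submission
  imports Defs
begin

text \<open>Because valuations are symmetric and submodular, a player's utility from the k items of
  smallest current share is concave in k. Shares only increase, and only outside the bundle just
  assigned; by concavity this never lowers the demand size of an active player, so every assigned
  bundle stays among the cheapest items and the accounting of the earlier rounds is not disturbed.
  When a player leaves, it pays at most the current average cost of each item it takes, and by
  optimality of its demand, payment plus lost value is at most the shares of its optimal bundle
  plus its optimal lost value. The share of an item is at most \<alpha> times the average cost over its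
  optimal receivers that are still active, so as these receivers leave one by one the charges sum
  to at most \<alpha> c_j(T*_j) H_|T*_j|, where T*_j is the set of receivers of j in A*. Hence
  \<pi>(A) \<le> \<alpha> H_n \<pi>(A*).\<close>

section \<open>Ranking items by cost share\<close>

definition share_prec :: "(nat \<Rightarrow> real) \<Rightarrow> nat \<Rightarrow> nat \<Rightarrow> bool" where
  "share_prec sh a b \<longleftrightarrow> sh a < sh b \<or> (sh a = sh b \<and> a < b)"

definition share_rank :: "nat \<Rightarrow> (nat \<Rightarrow> real) \<Rightarrow> nat \<Rightarrow> nat" where
  "share_rank m sh j = card {j' \<in> {..<m}. share_prec sh j' j}"

lemma cheapest_eq_share_rank: "cheapest m sh k = {j \<in> {..<m}. share_rank m sh j < k}"
  unfolding cheapest_def share_rank_def share_prec_def by simp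

lemma share_prec_trans: "share_prec sh a b \<Longrightarrow> share_prec sh b c \<Longrightarrow> share_prec sh a c"
  unfolding share_prec_def by auto

lemma share_prec_irrefl: "\<not> share_prec sh a a"
  unfolding share_prec_def by auto

lemma share_prec_total: "a \<noteq> b \<Longrightarrow> share_prec sh a b \<or> share_prec sh b a"
  unfolding share_prec_def by auto

lemma share_rank_strict_mono:
  assumes "share_prec sh a b" "a < m"
  shows "share_rank m sh a < share_rank m sh b"
proof -
  have "{j' \<in> {..<m}. share_prec sh j' a} \<subset> {j' \<in> {..<m}. share_prec sh j' b}"
    using assms share_prec_trans share_prec_irrefl by blast
  then show ?thesis unfolding share_rank_def by (intro psubset_card_mono) auto
qed

lemma share_rank_less: assumes "j < m" shows "share_rank m sh j < m"
proof -
  have "{j' \<in> {..<m}. share_prec sh j' j} \<subseteq> {..<m} - {j}" using share_prec_irrefl by blast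
  then have "share_rank m sh j \<le> card ({..<m} - {j})" unfolding share_rank_def by (intro card_mono) auto
  then show ?thesis using assms by simp
qed

lemma inj_on_share_rank: "inj_on (share_rank m sh) {..<m}"
proof (rule inj_onI)
  fix a b assume "a \<in> {..<m}" "b \<in> {..<m}" "share_rank m sh a = share_rank m sh b"
  then show "a = b"
    using share_prec_total[of a b sh] share_rank_strict_mono[of sh a b m] share_rank_strict_mono[of sh b a m]
    by (metis lessThan_iff less_irrefl)
qed

lemma share_rank_image: "share_rank m sh ` {..<m} = {..<m}"
  using inj_on_share_rank share_rank_less by (intro endo_inj_surj) auto

lemma cheapest_subset: "cheapest m sh k \<subseteq> {..<m}"
  by (auto simp: cheapest_eq_share_rank)

lemma finite_cheapest: "finite (cheapest m sh k)"
  using finite_subset[OF cheapest_subset] by simp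

lemma cheapest_mono: "k \<le> k' \<Longrightarrow> cheapest m sh k \<subseteq> cheapest m sh k'"
  by (auto simp: cheapest_eq_share_rank)

lemma card_cheapest: "card (cheapest m sh k) = min k m"
proof -
  have "share_rank m sh ` cheapest m sh k = {..<min k m}"
  proof
    show "share_rank m sh ` cheapest m sh k \<subseteq> {..<min k m}"
      using share_rank_less by (auto simp: cheapest_eq_share_rank)
    show "{..<min k m} \<subseteq> share_rank m sh ` cheapest m sh k"
    proof
      fix r assume "r \<in> {..<min k m}"
      then obtain j where "j < m" "r = share_rank m sh j"
        using share_rank_image[of m sh] by (metis imageE lessThan_iff min_less_iff_conj)
      then show "r \<in> share_rank m sh ` cheapest m sh k"
        using \<open>r \<in> {..<min k m}\<close> by (auto simp: cheapest_eq_share_rank)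
    qed
  qed
  moreover have "inj_on (share_rank m sh) (cheapest m sh k)"
    using inj_on_share_rank cheapest_subset by (rule inj_on_subset)
  ultimately show ?thesis by (metis card_image card_lessThan)
qed

lemma cheapest_prec_outside:
  assumes "a \<in> cheapest m sh k" "b < m" "b \<notin> cheapest m sh k"
  shows "share_prec sh a b"
proof -
  have "a \<noteq> b" "\<not> share_prec sh b a"
    using assms share_rank_strict_mono[of sh b a m] by (auto simp: cheapest_eq_share_rank)
  then show ?thesis using share_prec_total by blast
qed

lemma cheapest_le_outside:
  assumes "a \<in> cheapest m sh k" "b < m" "b \<notin> cheapest m sh k"
  shows "sh a \<le> sh b"
  using cheapest_prec_outside[OF assms] unfolding share_prec_def by auto

lemma cheapest_Suc:
  assumes "Suc k \<le> m"
  obtains x where "x < m" "x \<notin> cheapest m sh k" "cheapest m sh (Suc k) = insert x (cheapest m sh k)"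
proof -
  have sub: "cheapest m sh k \<subseteq> cheapest m sh (Suc k)" by (rule cheapest_mono) simp
  have "card (cheapest m sh (Suc k) - cheapest m sh k) = 1"
    using card_cheapest[of m sh k] card_cheapest[of m sh "Suc k"] assms sub
    by (simp add: card_Diff_subset finite_cheapest)
  then obtain x where x: "cheapest m sh (Suc k) - cheapest m sh k = {x}" by (auto simp: card_Suc_eq)
  then show ?thesis using that sub cheapest_subset by blast
qed

lemma sum_le_sum_if_card_eq:
  fixes f :: "'b \<Rightarrow> 'a::linordered_semidom"
  assumes "finite A" "finite B" "card A = card B" "\<And>a b. a \<in> A \<Longrightarrow> b \<in> B \<Longrightarrow> f a \<le> f b"
  shows "sum f A \<le> sum f B"
proof (cases "A = {}")
  case False
  define M where "M = Max (f ` A)"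
  have "M \<in> f ` A" unfolding M_def using False assms(1) by simp
  then obtain a where "a \<in> A" "M = f a" by blast
  have "sum f A \<le> of_nat (card A) * M"
    using sum_bounded_above[of A f M] assms(1) unfolding M_def by auto
  also have "\<dots> \<le> sum f B"
    using sum_bounded_below[of B M f] assms \<open>a \<in> A\<close> \<open>M = f a\<close> by auto
  finally show ?thesis .
qed (use assms in simp)

text \<open>Exchanging items of S outside the cheapest set against cheapest items outside S.\<close>
lemma sum_cheapest_le:
  assumes S: "S \<subseteq> {..<m}"
  shows "sum sh (cheapest m sh (card S)) \<le> sum sh S"
proof -
  let ?C = "cheapest m sh (card S)"
  have fS: "finite S" using finite_subset[OF S] by simp
  have cC: "card ?C = card S" using card_cheapest card_mono[OF _ S] by simp
  have "sum sh (?C - S) \<le> sum sh (S - ?C)"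
  proof (rule sum_le_sum_if_card_eq)
    show "card (?C - S) = card (S - ?C)"
      using cC fS finite_cheapest by (simp add: card_Diff_subset_Int Int_commute)
    show "sh a \<le> sh b" if "a \<in> ?C - S" "b \<in> S - ?C" for a b
      using that S cheapest_le_outside[of a m sh "card S" b] by auto
  qed (use fS finite_cheapest in simp_all)
  moreover have "sum sh ?C = sum sh (?C - S) + sum sh (?C \<inter> S)"
    "sum sh S = sum sh (S - ?C) + sum sh (?C \<inter> S)"
    using fS finite_cheapest sum.Int_Diff by (metis Int_commute add.commute)+
  ultimately show ?thesis by linarith
qed

section \<open>Demand under symmetric submodular valuations\<close>

definition cheapest_util ::
    "nat \<Rightarrow> (nat \<Rightarrow> nat set \<Rightarrow> real) \<Rightarrow> (nat \<Rightarrow> real) \<Rightarrow> nat \<Rightarrow> nat \<Rightarrow> real" where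
  "cheapest_util m b sh i k = util b sh i (cheapest m sh k)"

lemma util_le_best_util: "S \<subseteq> {..<m} \<Longrightarrow> util b sh i S \<le> best_util m b sh i"
  unfolding best_util_def by (intro Max_ge) auto

lemma best_util_attained: "\<exists>S \<subseteq> {..<m}. util b sh i S = best_util m b sh i"
proof -
  have "best_util m b sh i \<in> util b sh i ` Pow {..<m}"
    unfolding best_util_def by (intro Max_in) auto
  then show ?thesis by auto
qed

lemma cheapest_util_le_best_util: "cheapest_util m b sh i k \<le> best_util m b sh i"
  unfolding cheapest_util_def using cheapest_subset by (rule util_le_best_util)

lemma util_le_cheapest_util:
  assumes sym: "symmetric_fn {..<m} (b i)" and S: "S \<subseteq> {..<m}"
  shows "util b sh i S \<le> cheapest_util m b sh i (card S)"
proof -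
  have "card (cheapest m sh (card S)) = card S" using card_cheapest card_mono[OF _ S] by simp
  then have "b i S = b i (cheapest m sh (card S))"
    using sym S cheapest_subset unfolding symmetric_fn_def by metis
  then show ?thesis unfolding cheapest_util_def util_def using sum_cheapest_le[OF S, of sh] by simp
qed

context
  fixes m :: nat and b :: "nat \<Rightarrow> nat set \<Rightarrow> real" and sh :: "nat \<Rightarrow> real" and i :: nat
  assumes sym: "symmetric_fn {..<m} (b i)"
begin

private abbreviation "optimal_bundles \<equiv> {S \<in> Pow {..<m}. util b sh i S = best_util m b sh i}"

private lemma finite_card_optimal_bundles: "finite (card ` optimal_bundles)"
  by (rule finite_imageI) (rule finite_subset[of _ "Pow {..<m}"], auto)

private lemma demand_card_attained:
  obtains S where "S \<subseteq> {..<m}" "util b sh i S = best_util m b sh i" "card S = demand_card m b sh i"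
proof -
  obtain S0 where "S0 \<subseteq> {..<m}" "util b sh i S0 = best_util m b sh i"
    using best_util_attained by blast
  then have "optimal_bundles \<noteq> {}" by blast
  then have "demand_card m b sh i \<in> card ` optimal_bundles"
    unfolding demand_card_def using finite_card_optimal_bundles by (intro Max_in) simp_all
  then show ?thesis using that by auto
qed

lemma demand_card_le: "demand_card m b sh i \<le> m"
  using demand_card_attained card_mono[of "{..<m}"] by (metis finite_lessThan card_lessThan)

lemma cheapest_util_demand_card: "cheapest_util m b sh i (demand_card m b sh i) = best_util m b sh i"
proof -
  obtain S where "S \<subseteq> {..<m}" "util b sh i S = best_util m b sh i" "card S = demand_card m b sh i"
    by (rule demand_card_attained)
  then have "best_util m b sh i \<le> cheapest_util m b sh i (demand_card m b sh i)"
    using util_le_cheapest_util[where b=b and i=i, OF sym, of S sh] by simp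
  then show ?thesis using cheapest_util_le_best_util by (intro antisym)
qed

lemma le_demand_card:
  assumes "k \<le> m" "cheapest_util m b sh i k = best_util m b sh i"
  shows "k \<le> demand_card m b sh i"
proof -
  have "k = card (cheapest m sh k)" using card_cheapest assms(1) by simp
  moreover have "cheapest m sh k \<in> optimal_bundles"
    using assms(2) cheapest_subset[of m sh k] unfolding cheapest_util_def by simp
  ultimately have "k \<in> card ` optimal_bundles" by (rule image_eqI)
  then show ?thesis unfolding demand_card_def using finite_card_optimal_bundles by (intro Max_ge)
qed

lemma util_le_util_demand:
  assumes "S \<subseteq> {..<m}"
  shows "util b sh i S \<le> util b sh i (demand m b sh i)"
  using util_le_best_util[OF assms] cheapest_util_demand_card
  unfolding demand_def cheapest_util_def by simp

end

text \<open>Submodularity of the symmetric valuation makes the marginal value of the k-th cheapest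
  item non-increasing in k, while its share is non-decreasing.\<close>
lemma cheapest_util_concave:
  assumes sym: "symmetric_fn {..<m} (b i)" and sub: "submodular {..<m} (b i)"
    and k: "Suc (Suc k) \<le> m"
  shows "cheapest_util m b sh i (Suc (Suc k)) - cheapest_util m b sh i (Suc k)
    \<le> cheapest_util m b sh i (Suc k) - cheapest_util m b sh i k"
proof -
  let ?C = "cheapest m sh"
  obtain x where x: "x < m" "x \<notin> ?C k" "?C (Suc k) = insert x (?C k)"
    using cheapest_Suc[of k m sh] k by auto
  obtain y where y: "y < m" "y \<notin> ?C (Suc k)" "?C (Suc (Suc k)) = insert y (?C (Suc k))"
    using cheapest_Suc[of "Suc k" m sh] k by auto
  have "b i (insert y (?C (Suc k))) - b i (?C (Suc k)) \<le> b i (insert y (?C k)) - b i (?C k)"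
    using sub[unfolded submodular_def, rule_format, of "?C k" "?C (Suc k)" y]
      y cheapest_subset[of m sh "Suc k"] x by auto
  moreover have "b i (insert y (?C k)) = b i (insert x (?C k))"
  proof -
    have "card (insert y (?C k)) = card (insert x (?C k))" using x y finite_cheapest by simp
    moreover have "insert y (?C k) \<subseteq> {..<m}" "insert x (?C k) \<subseteq> {..<m}"
      using x y cheapest_subset by auto
    ultimately show ?thesis
      using sym[unfolded symmetric_fn_def, rule_format, of "insert y (?C k)" "insert x (?C k)"] by simp
  qed
  moreover have "sh x \<le> sh y" using cheapest_le_outside[of x m sh "Suc k" y] x y by auto
  moreover have "sum sh (?C (Suc k)) = sh x + sum sh (?C k)"
    "sum sh (?C (Suc (Suc k))) = sh y + sum sh (?C (Suc k))"
    using x y finite_cheapest by simp_all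
  ultimately show ?thesis unfolding cheapest_util_def util_def using x y by simp
qed

lemma concave_seq_mono_below_max:
  fixes f :: "nat \<Rightarrow> real"
  assumes concave: "\<And>k. Suc (Suc k) \<le> m \<Longrightarrow> f (Suc (Suc k)) - f (Suc k) \<le> f (Suc k) - f k"
    and d: "d \<le> m" and max: "\<And>k. k \<le> m \<Longrightarrow> f k \<le> f d"
    and ab: "a \<le> b" "b \<le> d"
  shows "f a \<le> f b"
proof -
  have diff_antimono: "f (Suc j) - f j \<le> f (Suc i) - f i" if "i \<le> j" "j < m" for i j
    using that
  proof (induction j rule: dec_induct)
    case (step j)
    then show ?case using concave[of j] by simp
  qed simp
  have increasing: "f i \<le> f (Suc i)" if "i < d" for i
  proof (rule ccontr)
    assume "\<not> f i \<le> f (Suc i)"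
    have "f d - f i = (\<Sum>j = i..<d. f (Suc j) - f j)" using that by (simp add: sum_Suc_diff')
    also have "\<dots> \<le> (\<Sum>j = i..<d. f (Suc i) - f i)"
      using diff_antimono d by (intro sum_mono) auto
    also have "\<dots> < 0" using \<open>\<not> f i \<le> f (Suc i)\<close> that by (simp add: mult_pos_neg)
    finally show False using max[of i] that d by simp
  qed
  show ?thesis using ab
  proof (induction b rule: dec_induct)
    case (step j)
    then show ?case using increasing[of j] by simp
  qed simp
qed

lemma share_rank_raise_outside:
  assumes agree: "\<And>j. j \<in> cheapest m sh k \<Longrightarrow> sh' j = sh j"
    and raise: "\<And>j. sh j \<le> sh' j" and j: "j \<in> cheapest m sh k"
  shows "share_rank m sh' j = share_rank m sh j"
proof -
  have "a \<in> cheapest m sh k" if "a < m" "share_prec sh a j" for a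
    using share_rank_strict_mono[OF that(2) that(1)] j by (auto simp: cheapest_eq_share_rank that(1))
  then have "{a \<in> {..<m}. share_prec sh' a j} = {a \<in> {..<m}. share_prec sh a j}"
    using agree raise j unfolding share_prec_def by (smt (verit) Collect_cong lessThan_iff)
  then show ?thesis unfolding share_rank_def by simp
qed

lemma cheapest_raise_outside:
  assumes k: "k \<le> m" and agree: "\<And>j. j \<in> cheapest m sh k \<Longrightarrow> sh' j = sh j"
    and raise: "\<And>j. sh j \<le> sh' j" and k': "k' \<le> k"
  shows "cheapest m sh' k' = cheapest m sh k'"
proof -
  let ?D = "cheapest m sh k"
  have same_rank: "share_rank m sh' j = share_rank m sh j" if "j \<in> ?D" for j
    using share_rank_raise_outside[OF agree raise that] by blast
  have k_le_rank: "k \<le> share_rank m sh' j" if j: "j < m" "j \<notin> ?D" for j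
  proof -
    have "?D \<subseteq> {a \<in> {..<m}. share_prec sh' a j}"
    proof
      fix d assume d: "d \<in> ?D"
      have "share_prec sh d j" using cheapest_prec_outside[OF d j] .
      moreover have "sh' d = sh d" "sh j \<le> sh' j" "d < m" using d agree raise cheapest_subset[of m sh k] by auto
      ultimately show "d \<in> {a \<in> {..<m}. share_prec sh' a j}" unfolding share_prec_def by auto
    qed
    then have "card ?D \<le> share_rank m sh' j" unfolding share_rank_def by (intro card_mono) auto
    then show ?thesis using card_cheapest k by simp
  qed
  have "cheapest m sh' k' \<subseteq> ?D"
    using k_le_rank k' by (force simp: cheapest_eq_share_rank)
  moreover have "cheapest m sh k' \<subseteq> ?D" using cheapest_mono[OF k'] .
  ultimately show ?thesis using same_rank by (auto simp: cheapest_eq_share_rank)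
qed

text \<open>On 0..k the utility curve is unchanged, and by concavity it is non-decreasing up to the
  old demand size.\<close>
lemma demand_card_raise_outside:
  assumes sym: "symmetric_fn {..<m} (b i)" and sub: "submodular {..<m} (b i)"
    and k: "k \<le> m" and agree: "\<And>j. j \<in> cheapest m sh k \<Longrightarrow> sh' j = sh j"
    and raise: "\<And>j. sh j \<le> sh' j" and demand: "k \<le> demand_card m b sh i"
  shows "k \<le> demand_card m b sh' i"
proof (rule ccontr)
  assume "\<not> k \<le> demand_card m b sh' i"
  then have less: "demand_card m b sh' i < k" by simp
  have unchanged: "cheapest_util m b sh' i k' = cheapest_util m b sh i k'" if "k' \<le> k" for k'
  proof -
    have "cheapest m sh' k' = cheapest m sh k'" using cheapest_raise_outside[OF k agree raise that] .
    moreover have "sum sh' (cheapest m sh k') = sum sh (cheapest m sh k')"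
      using cheapest_mono[OF that] agree by (intro sum.cong) auto
    ultimately show ?thesis unfolding cheapest_util_def util_def by simp
  qed
  have mono: "cheapest_util m b sh i a \<le> cheapest_util m b sh i a'"
    if "a \<le> a'" "a' \<le> demand_card m b sh i" for a a'
    using concave_seq_mono_below_max[of m "cheapest_util m b sh i",
        OF cheapest_util_concave[where b=b and i=i, OF sym sub]
          demand_card_le[where b=b and i=i and sh=sh, OF sym] _ that]
      cheapest_util_demand_card[where b=b and i=i and sh=sh, OF sym] cheapest_util_le_best_util by metis
  have "best_util m b sh' i = cheapest_util m b sh' i (demand_card m b sh' i)"
    using cheapest_util_demand_card[where b=b and i=i and sh=sh', OF sym] by simp
  also have "\<dots> = cheapest_util m b sh i (demand_card m b sh' i)" using unchanged less by simp
  also have "\<dots> \<le> cheapest_util m b sh i k" using mono less demand by simp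
  also have "\<dots> = cheapest_util m b sh' i k" using unchanged by simp
  finally have "cheapest_util m b sh' i k = best_util m b sh' i"
    using cheapest_util_le_best_util[of m b sh' i k] by simp
  then show False using le_demand_card[where b=b and i=i and sh=sh', OF sym k] less by simp
qed

section \<open>The invariant of the mechanism\<close>

locale cost_sharing_instance =
  fixes n m :: nat and \<alpha> :: real
    and v :: "nat \<Rightarrow> nat set \<Rightarrow> real" and c :: "nat \<Rightarrow> nat set \<Rightarrow> real"
    and Aopt :: "nat \<Rightarrow> nat set"
  assumes alpha: "\<alpha> \<ge> 1"
    and v_mono: "\<forall>i<n. non_decreasing {..<m} (v i)"
    and v_sym: "\<forall>i<n. symmetric_fn {..<m} (v i)"
    and v_sub: "\<forall>i<n. submodular {..<m} (v i)"
    and c_nonneg: "\<forall>j<m. \<forall>T \<subseteq> {..<n}. c j T \<ge> 0"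
    and c_empty: "\<forall>j<m. c j {} = 0"
    and c_mono: "\<forall>j<m. non_decreasing {..<n} (c j)"
    and c_avg: "\<forall>j<m. avg_decreasing \<alpha> {..<n} (c j)"
    and opt_alloc: "allocation n m Aopt"
begin

definition opt_receivers :: "nat \<Rightarrow> nat set" where
  "opt_receivers j = receivers n Aopt j"

text \<open>Inactive receivers of item j pay its current average cost; once X = {} this is the total
  cost of the items.\<close>
definition charged_cost :: "nat set \<Rightarrow> (nat \<Rightarrow> nat set) \<Rightarrow> real" where
  "charged_cost X T = (\<Sum>j<m. real (card (T j - X)) * (c j (T j) / real (card (T j))))"

definition lost_value :: "nat set \<Rightarrow> (nat \<Rightarrow> nat set) \<Rightarrow> real" where
  "lost_value X A = (\<Sum>i\<in>{..<n} - X. v i {..<m} - v i (A i))"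

definition potential :: "nat set \<Rightarrow> real" where
  "potential X = (\<Sum>j<m. \<alpha> * c j (opt_receivers j) *
     (harm (card (opt_receivers j)) - harm (card (opt_receivers j \<inter> X))))"

lemma opt_receivers_subset: "opt_receivers j \<subseteq> {..<n}"
  unfolding opt_receivers_def receivers_def by auto

lemma finite_opt_receivers: "finite (opt_receivers j)"
  using finite_subset[OF opt_receivers_subset] by simp

lemma mem_opt_receivers: "i < n \<Longrightarrow> i \<in> opt_receivers j \<longleftrightarrow> j \<in> Aopt i"
  unfolding opt_receivers_def receivers_def by auto

lemma Aopt_subset: "i < n \<Longrightarrow> Aopt i \<subseteq> {..<m}"
  using opt_alloc unfolding allocation_def by auto

lemma avg_cost_le:
  "j < m \<Longrightarrow> S \<noteq> {} \<Longrightarrow> S \<subseteq> T \<Longrightarrow> T \<subseteq> {..<n} \<Longrightarrow>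
    c j T / real (card T) \<le> \<alpha> * (c j S / real (card S))"
  using c_avg unfolding avg_decreasing_def by blast

lemma cost_mono: "j < m \<Longrightarrow> S \<subseteq> T \<Longrightarrow> T \<subseteq> {..<n} \<Longrightarrow> c j S \<le> c j T"
  using c_mono unfolding non_decreasing_def by blast

lemma lost_value_remove:
  assumes "p \<in> X" "p < n"
  shows "lost_value (X - {p}) B = lost_value X B + (v p {..<m} - v p (B p))"
proof -
  have "{..<n} - (X - {p}) = insert p ({..<n} - X)" "p \<notin> {..<n} - X"
    using assms by auto
  then show ?thesis unfolding lost_value_def by simp
qed

lemma potential_remove:
  assumes "p \<in> X" "p < n"
  shows "potential (X - {p}) =
    potential X + (\<Sum>j\<in>Aopt p. \<alpha> * (c j (opt_receivers j) / real (card (opt_receivers j \<inter> X))))"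
proof -
  let ?share = "\<lambda>j. \<alpha> * (c j (opt_receivers j) / real (card (opt_receivers j \<inter> X)))"
  have harm_remove: "harm (card (opt_receivers j \<inter> X)) =
      harm (card (opt_receivers j \<inter> (X - {p}))) + inverse (real (card (opt_receivers j \<inter> X)))"
    if "j \<in> Aopt p" for j
  proof -
    have "opt_receivers j \<inter> X = insert p (opt_receivers j \<inter> (X - {p}))"
      using that assms mem_opt_receivers by auto
    then have "card (opt_receivers j \<inter> X) = Suc (card (opt_receivers j \<inter> (X - {p})))"
      using finite_opt_receivers by (simp add: card_insert_if)
    then show ?thesis by (simp add: harm_Suc)
  qed
  have "opt_receivers j \<inter> (X - {p}) = opt_receivers j \<inter> X" if "j \<notin> Aopt p" for j
    using that assms mem_opt_receivers by auto
  then have "\<alpha> * c j (opt_receivers j) *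
        (harm (card (opt_receivers j)) - harm (card (opt_receivers j \<inter> (X - {p})))) =
      \<alpha> * c j (opt_receivers j) * (harm (card (opt_receivers j)) - harm (card (opt_receivers j \<inter> X)))
        + (if j \<in> Aopt p then ?share j else 0)" for j
    using harm_remove[of j] by (cases "j \<in> Aopt p") (simp_all add: algebra_simps divide_inverse)
  then have "potential (X - {p}) = potential X + (\<Sum>j<m. if j \<in> Aopt p then ?share j else 0)"
    unfolding potential_def by (simp add: sum.distrib)
  also have "(\<Sum>j<m. if j \<in> Aopt p then ?share j else 0) = sum ?share (Aopt p)"
    using sum.inter_restrict[of "{..<m}" ?share "Aopt p"] Aopt_subset[OF assms(2)]
    by (simp add: Int_absorb1)
  finally show ?thesis .
qed

lemma potential_empty_le: "potential {} \<le> \<alpha> * harm n * (\<Sum>j<m. c j (opt_receivers j))"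
proof -
  have "potential {} = (\<Sum>j<m. \<alpha> * c j (opt_receivers j) * harm (card (opt_receivers j)))"
    unfolding potential_def by (simp add: harm_def)
  also have "\<dots> \<le> (\<Sum>j<m. \<alpha> * c j (opt_receivers j) * harm n)"
  proof (rule sum_mono)
    fix j assume "j \<in> {..<m}"
    then have "c j (opt_receivers j) \<ge> 0" using c_nonneg opt_receivers_subset by auto
    moreover have "card (opt_receivers j) \<le> n" using card_mono[OF _ opt_receivers_subset] by simp
    ultimately show "\<alpha> * c j (opt_receivers j) * harm (card (opt_receivers j))
        \<le> \<alpha> * c j (opt_receivers j) * harm n"
      using alpha by (intro mult_left_mono harm_mono) auto
  qed
  also have "\<dots> = \<alpha> * harm n * (\<Sum>j<m. c j (opt_receivers j))"
    by (simp add: sum_distrib_left sum_distrib_right algebra_simps)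
  finally show ?thesis .
qed

end

text \<open>All bundles assigned so far lie among the K
  currently cheapest items while every active player still demands at least K items; this is what
  keeps later share increases away from assigned bundles. The last assumption is the amortised
  accounting: the average costs charged to departed players are paid for by the value they lost
  plus the potential released by the optimal receivers that left the active set.\<close>
locale iacsm_state = cost_sharing_instance +
  fixes t :: nat and X :: "nat set" and T :: "nat \<Rightarrow> nat set" and sh :: "nat \<Rightarrow> real"
    and A :: "nat \<Rightarrow> nat set" and K :: nat
  assumes finite_X: "finite X" and X_subset: "X \<subseteq> {..<n}" and card_X: "card X = n - t"
    and X_subset_T: "\<And>j. X \<subseteq> T j" and T_subset: "\<And>j. T j \<subseteq> {..<n}"
    and mem_T: "\<And>i j. i < n \<Longrightarrow> i \<notin> X \<Longrightarrow> i \<in> T j \<longleftrightarrow> j \<in> A i"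
    and K_le: "K \<le> m"
    and assigned_cheapest: "\<And>i. i < n \<Longrightarrow> i \<notin> X \<Longrightarrow> A i \<subseteq> cheapest m sh K"
    and K_le_demand: "\<And>i. i \<in> X \<Longrightarrow> K \<le> demand_card m v sh i"
    and avg_le_share: "\<And>j. j < m \<Longrightarrow> T j \<noteq> {} \<Longrightarrow> c j (T j) / real (card (T j)) \<le> sh j"
    and share_le_avg: "\<And>j R. j < m \<Longrightarrow> R \<noteq> {} \<Longrightarrow> R \<subseteq> X \<Longrightarrow> sh j \<le> \<alpha> * (c j R / real (card R))"
    and accounting: "charged_cost X T + lost_value X A \<le> lost_value X Aopt + potential X"
begin

lemma finite_T: "finite (T j)"
  using finite_subset[OF T_subset] by simp

lemma final_social_cost:
  assumes "t = n"
  shows "social_cost n m v c A \<le> lost_value {} Aopt + potential {}"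
proof -
  have X: "X = {}" using card_X finite_X assms by simp
  have "receivers n A j = T j" for j
    using mem_T T_subset unfolding receivers_def X by blast
  moreover have "charged_cost {} T = (\<Sum>j<m. c j (T j))"
    unfolding charged_cost_def
  proof (rule sum.cong)
    fix j assume "j \<in> {..<m}"
    then show "real (card (T j - {})) * (c j (T j) / real (card (T j))) = c j (T j)"
      using c_empty finite_T[of j] by (cases "T j = {}") simp_all
  qed simp
  ultimately have "social_cost n m v c A = charged_cost {} T + lost_value {} A"
    unfolding social_cost_def lost_value_def by simp
  then show ?thesis using accounting X by simp
qed

end

locale iacsm_round = iacsm_state +
  assumes t_less: "t < n"
begin

definition chosen :: nat where
  "chosen = (LEAST i. i \<in> X \<and> (\<forall>i'\<in>X. demand_card m v sh i \<le> demand_card m v sh i'))"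

definition bundle_size :: nat where
  "bundle_size = demand_card m v sh chosen"

definition chosen_bundle :: "nat set" where
  "chosen_bundle = demand m v sh chosen"

definition next_T :: "nat \<Rightarrow> nat set" where
  "next_T = (\<lambda>j. if j \<in> chosen_bundle then T j else T j - {chosen})"

definition next_sh :: "nat \<Rightarrow> real" where
  "next_sh = (\<lambda>j. if j \<notin> chosen_bundle \<and> next_T j \<noteq> {}
     then max (sh j) (c j (next_T j) / real (card (next_T j))) else sh j)"

lemma X_nonempty: "X \<noteq> {}"
  using card_X t_less by auto

lemma iacsm_step_eq:
  "iacsm_step m v c (X, T, sh, A) = (X - {chosen}, next_T, next_sh, A(chosen := chosen_bundle))"
  unfolding iacsm_step_def chosen_def chosen_bundle_def next_T_def next_sh_def Let_def
  using X_nonempty by simp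

lemma chosen_minimal: "chosen \<in> X \<and> (\<forall>i'\<in>X. bundle_size \<le> demand_card m v sh i')"
proof -
  have "Min (demand_card m v sh ` X) \<in> demand_card m v sh ` X"
    using finite_X X_nonempty by simp
  then obtain i0 where "i0 \<in> X" "demand_card m v sh i0 = Min (demand_card m v sh ` X)" by auto
  then have "\<exists>i. i \<in> X \<and> (\<forall>i'\<in>X. demand_card m v sh i \<le> demand_card m v sh i')"
    using finite_X by auto
  then show ?thesis unfolding bundle_size_def chosen_def by (rule LeastI_ex)
qed

lemma chosen_in_X: "chosen \<in> X"
  using chosen_minimal by blast

lemma chosen_less: "chosen < n"
  using chosen_in_X X_subset by auto

lemma sym_chosen: "symmetric_fn {..<m} (v chosen)"
  using v_sym chosen_less by blast

lemma bundle_eq_cheapest: "chosen_bundle = cheapest m sh bundle_size"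
  unfolding chosen_bundle_def demand_def bundle_size_def ..

lemma bundle_subset: "chosen_bundle \<subseteq> {..<m}"
  using bundle_eq_cheapest cheapest_subset by simp

lemma bundle_size_le: "bundle_size \<le> m"
  unfolding bundle_size_def using demand_card_le[where b=v and i=chosen, OF sym_chosen] .

lemma K_le_bundle_size: "K \<le> bundle_size"
  using K_le_demand chosen_in_X unfolding bundle_size_def by blast

lemma next_sh_bundle: "j \<in> cheapest m sh bundle_size \<Longrightarrow> next_sh j = sh j"
  unfolding next_sh_def bundle_eq_cheapest by simp

lemma sh_le_next_sh: "sh j \<le> next_sh j"
  unfolding next_sh_def by simp

lemma cheapest_next_sh: "cheapest m next_sh bundle_size = chosen_bundle"
  using cheapest_raise_outside[OF bundle_size_le next_sh_bundle sh_le_next_sh order_refl]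
  by (simp add: bundle_eq_cheapest)

lemma inactive_receivers_in_bundle:
  assumes "j \<notin> chosen_bundle"
  shows "T j \<subseteq> X"
proof
  fix i assume "i \<in> T j"
  show "i \<in> X"
  proof (rule ccontr)
    assume "i \<notin> X"
    have "i < n" using \<open>i \<in> T j\<close> T_subset by auto
    then have "j \<in> A i" using mem_T \<open>i \<in> T j\<close> \<open>i \<notin> X\<close> by blast
    moreover have "A i \<subseteq> chosen_bundle"
      using assigned_cheapest[OF \<open>i < n\<close> \<open>i \<notin> X\<close>] cheapest_mono[OF K_le_bundle_size]
      unfolding bundle_eq_cheapest by blast
    ultimately show False using assms by blast
  qed
qed

text \<open>The chosen player becomes an inactive receiver exactly of the items in its bundle,
  each charged at most its current share.\<close>
lemma charged_cost_next: "charged_cost (X - {chosen}) next_T \<le> charged_cost X T + sum sh chosen_bundle"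
proof -
  have "real (card (next_T j - (X - {chosen}))) * (c j (next_T j) / real (card (next_T j)))
      \<le> real (card (T j - X)) * (c j (T j) / real (card (T j))) + (if j \<in> chosen_bundle then sh j else 0)"
    if "j < m" for j
  proof (cases "j \<in> chosen_bundle")
    case True
    have "next_T j - (X - {chosen}) = insert chosen (T j - X)"
      using True chosen_in_X X_subset_T unfolding next_T_def by auto
    then have "card (next_T j - (X - {chosen})) = Suc (card (T j - X))"
      using finite_T[of j] chosen_in_X by simp
    moreover have "c j (T j) / real (card (T j)) \<le> sh j"
      using avg_le_share[OF that] chosen_in_X X_subset_T by blast
    moreover have "next_T j = T j" using True unfolding next_T_def by simp
    ultimately show ?thesis using True by (simp only: if_True of_nat_Suc distrib_right)
  next
    case False
    then have "next_T j - (X - {chosen}) = {}" "T j - X = {}"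
      using inactive_receivers_in_bundle[OF False] unfolding next_T_def by auto
    then have "card (next_T j - (X - {chosen})) = 0" "card (T j - X) = 0"
      by (simp_all only: card.empty)
    then show ?thesis using False by simp
  qed
  then have "charged_cost (X - {chosen}) next_T
      \<le> charged_cost X T + (\<Sum>j<m. if j \<in> chosen_bundle then sh j else 0)"
    unfolding charged_cost_def sum.distrib[symmetric] by (intro sum_mono) simp
  also have "(\<Sum>j<m. if j \<in> chosen_bundle then sh j else 0) = sum sh chosen_bundle"
    using sum.inter_restrict[of "{..<m}" sh chosen_bundle] bundle_subset by (simp add: Int_absorb1)
  finally show ?thesis .
qed

lemma opt_shares_le:
  "sum sh (Aopt chosen) \<le>
    (\<Sum>j\<in>Aopt chosen. \<alpha> * (c j (opt_receivers j) / real (card (opt_receivers j \<inter> X))))"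
proof (rule sum_mono)
  fix j assume j: "j \<in> Aopt chosen"
  then have "j < m" using Aopt_subset[OF chosen_less] by auto
  have "chosen \<in> opt_receivers j \<inter> X"
    using mem_opt_receivers[OF chosen_less] j chosen_in_X by simp
  then have ne: "opt_receivers j \<inter> X \<noteq> {}" and pos: "real (card (opt_receivers j \<inter> X)) > 0"
    using finite_opt_receivers[of j] card_gt_0_iff by auto
  have "sh j \<le> \<alpha> * (c j (opt_receivers j \<inter> X) / real (card (opt_receivers j \<inter> X)))"
    using share_le_avg[OF \<open>j < m\<close> ne Int_lower2] .
  also have "\<dots> \<le> \<alpha> * (c j (opt_receivers j) / real (card (opt_receivers j \<inter> X)))"
    using cost_mono[OF \<open>j < m\<close> Int_lower1 opt_receivers_subset] pos alpha
    by (intro mult_left_mono divide_right_mono) auto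
  finally show "sh j \<le> \<alpha> * (c j (opt_receivers j) / real (card (opt_receivers j \<inter> X)))" .
qed

lemma next_accounting:
  "charged_cost (X - {chosen}) next_T + lost_value (X - {chosen}) (A(chosen := chosen_bundle))
    \<le> lost_value (X - {chosen}) Aopt + potential (X - {chosen})"
proof -
  have "lost_value X (A(chosen := chosen_bundle)) = lost_value X A"
    unfolding lost_value_def using chosen_in_X by (intro sum.cong) auto
  moreover have "v chosen (Aopt chosen) - sum sh (Aopt chosen) \<le> v chosen chosen_bundle - sum sh chosen_bundle"
    using util_le_util_demand[where b=v and i=chosen, OF sym_chosen Aopt_subset[OF chosen_less]]
    unfolding util_def chosen_bundle_def .
  ultimately show ?thesis
    using charged_cost_next opt_shares_le accounting
      lost_value_remove[OF chosen_in_X chosen_less, of "A(chosen := chosen_bundle)"]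
      lost_value_remove[OF chosen_in_X chosen_less, of Aopt]
      potential_remove[OF chosen_in_X chosen_less]
    by simp
qed

lemma next_T_subset: "next_T j \<subseteq> {..<n}"
  using T_subset unfolding next_T_def by auto

lemma X_minus_chosen_subset_next_T: "X - {chosen} \<subseteq> next_T j"
  using X_subset_T unfolding next_T_def by auto

lemma mem_next_T:
  assumes "i < n" "i \<notin> X - {chosen}"
  shows "i \<in> next_T j \<longleftrightarrow> j \<in> (A(chosen := chosen_bundle)) i"
proof (cases "i = chosen")
  case True
  then show ?thesis using chosen_in_X X_subset_T unfolding next_T_def by auto
next
  case False
  then show ?thesis using assms mem_T[of i j] unfolding next_T_def by auto
qed

lemma avg_le_next_sh:
  assumes "j < m" "next_T j \<noteq> {}"
  shows "c j (next_T j) / real (card (next_T j)) \<le> next_sh j"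
proof (cases "j \<in> chosen_bundle")
  case True
  then show ?thesis using avg_le_share[OF assms(1)] assms(2) unfolding next_sh_def next_T_def by simp
next
  case False
  then show ?thesis using assms(2) unfolding next_sh_def by simp
qed

lemma next_sh_le_avg:
  assumes "j < m" "R \<noteq> {}" "R \<subseteq> X - {chosen}"
  shows "next_sh j \<le> \<alpha> * (c j R / real (card R))"
proof -
  have "R \<subseteq> next_T j" using assms(3) X_minus_chosen_subset_next_T by blast
  then have "c j (next_T j) / real (card (next_T j)) \<le> \<alpha> * (c j R / real (card R))"
    using avg_cost_le[OF assms(1,2) _ next_T_subset] by blast
  moreover have "sh j \<le> \<alpha> * (c j R / real (card R))"
    using share_le_avg[OF assms(1,2)] assms(3) by blast
  ultimately show ?thesis unfolding next_sh_def by simp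
qed

lemma iacsm_state_next:
  "iacsm_state n m \<alpha> v c Aopt (Suc t) (X - {chosen}) next_T next_sh (A(chosen := chosen_bundle))
    bundle_size"
proof (intro iacsm_state.intro iacsm_state_axioms.intro)
  show "cost_sharing_instance n m \<alpha> v c Aopt" by (rule cost_sharing_instance_axioms)
  show "finite (X - {chosen})" "X - {chosen} \<subseteq> {..<n}" "card (X - {chosen}) = n - Suc t"
    using finite_X X_subset card_X chosen_in_X by auto
  show "(A(chosen := chosen_bundle)) i \<subseteq> cheapest m next_sh bundle_size"
    if "i < n" "i \<notin> X - {chosen}" for i
  proof (cases "i = chosen")
    case False
    then have "A i \<subseteq> cheapest m sh K" using that assigned_cheapest by simp
    then show ?thesis
      using False cheapest_mono[OF K_le_bundle_size] unfolding cheapest_next_sh bundle_eq_cheapest by auto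
  qed (simp add: cheapest_next_sh)
  show "bundle_size \<le> demand_card m v next_sh i" if "i \<in> X - {chosen}" for i
  proof -
    have "i < n" using that X_subset by auto
    then have "symmetric_fn {..<m} (v i)" "submodular {..<m} (v i)" using v_sym v_sub by auto
    moreover have "bundle_size \<le> demand_card m v sh i" using chosen_minimal that by blast
    ultimately show ?thesis
      using demand_card_raise_outside[where b=v and i=i and sh=sh and sh'=next_sh,
          OF _ _ bundle_size_le next_sh_bundle sh_le_next_sh] by blast
  qed
qed (use X_minus_chosen_subset_next_T next_T_subset mem_next_T bundle_size_le avg_le_next_sh
       next_sh_le_avg next_accounting in auto)

end

context cost_sharing_instance
begin

lemma iacsm_state_init:
  "iacsm_state n m \<alpha> v c Aopt 0 {..<n} (\<lambda>j. {..<n}) (\<lambda>j. c j {..<n} / real n) (\<lambda>i. {}) 0"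
proof (intro iacsm_state.intro iacsm_state_axioms.intro)
  show "cost_sharing_instance n m \<alpha> v c Aopt" by (rule cost_sharing_instance_axioms)
  show "c j {..<n} / real n \<le> \<alpha> * (c j R / real (card R))"
    if "j < m" "R \<noteq> {}" "R \<subseteq> {..<n}" for j R
    using avg_cost_le[OF that order_refl] by simp
  have "potential {..<n} = 0"
    unfolding potential_def using opt_receivers_subset by (simp add: Int_absorb2)
  then show "charged_cost {..<n} (\<lambda>j. {..<n}) + lost_value {..<n} (\<lambda>i. {})
      \<le> lost_value {..<n} Aopt + potential {..<n}"
    unfolding charged_cost_def lost_value_def by simp
qed auto

lemma iacsm_state_iterate:
  assumes "t \<le> n"
  shows "\<exists>X T sh A K. (iacsm_step m v c ^^ t) (iacsm_init n c) = (X, T, sh, A) \<and>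
    iacsm_state n m \<alpha> v c Aopt t X T sh A K"
  using assms
proof (induction t)
  case 0
  then show ?case using iacsm_state_init unfolding iacsm_init_def by auto
next
  case (Suc t)
  then obtain X T sh A K where state: "(iacsm_step m v c ^^ t) (iacsm_init n c) = (X, T, sh, A)"
    and "iacsm_state n m \<alpha> v c Aopt t X T sh A K" by auto
  then interpret round: iacsm_round n m \<alpha> v c Aopt t X T sh A K
    using Suc.prems by (simp add: iacsm_round_def iacsm_round_axioms_def)
  show ?case using state round.iacsm_step_eq round.iacsm_state_next by auto
qed

lemma lost_value_opt_nonneg: "lost_value X Aopt \<ge> 0"
  unfolding lost_value_def using v_mono Aopt_subset unfolding non_decreasing_def
  by (intro sum_nonneg) auto

lemma social_cost_opt_eq:
  "social_cost n m v c Aopt = (\<Sum>j<m. c j (opt_receivers j)) + lost_value {} Aopt"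
  unfolding social_cost_def lost_value_def opt_receivers_def by simp

lemma social_cost_opt_nonneg: "social_cost n m v c Aopt \<ge> 0"
proof -
  have "c j (opt_receivers j) \<ge> 0" if "j < m" for j
    using c_nonneg that opt_receivers_subset by blast
  then show ?thesis unfolding social_cost_opt_eq using lost_value_opt_nonneg
    by (intro add_nonneg_nonneg sum_nonneg) auto
qed

lemma iacsm_social_cost_le:
  "social_cost n m v c (iacsm n m v c) \<le> \<alpha> * harm n * social_cost n m v c Aopt"
proof -
  obtain X T sh A K where "(iacsm_step m v c ^^ n) (iacsm_init n c) = (X, T, sh, A)"
    and "iacsm_state n m \<alpha> v c Aopt n X T sh A K"
    using iacsm_state_iterate by blast
  then have "social_cost n m v c (iacsm n m v c) \<le> lost_value {} Aopt + potential {}"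
    using iacsm_state.final_social_cost unfolding iacsm_def by fastforce
  moreover have "lost_value {} Aopt \<le> \<alpha> * harm n * lost_value {} Aopt"
  proof (cases "n > 0")
    case True
    then have "(1::real) \<le> harm n" using harm_mono[of 1 n] by (simp add: harm_def)
    then have "1 * 1 \<le> \<alpha> * harm n" using alpha by (intro mult_mono) auto
    from mult_right_mono[OF this lost_value_opt_nonneg[of "{}"]] show ?thesis by simp
  next
    case False
    then have "lost_value {} Aopt = 0" unfolding lost_value_def by simp
    then show ?thesis by simp
  qed
  ultimately show ?thesis
    using potential_empty_le unfolding social_cost_opt_eq by (simp add: algebra_simps)
qed

end

theorem mainTheorem10:
  fixes n m :: nat and \<alpha> :: real
    and v :: "nat \<Rightarrow> nat set \<Rightarrow> real" and c :: "nat \<Rightarrow> nat set \<Rightarrow> real"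
    and Aopt :: "nat \<Rightarrow> nat set"
  assumes alpha: "\<alpha> \<ge> 1"
    and v_nonneg: "\<forall>i<n. \<forall>S \<subseteq> {..<m}. v i S \<ge> 0"
    and v_mono: "\<forall>i<n. non_decreasing {..<m} (v i)"
    and v_sym: "\<forall>i<n. symmetric_fn {..<m} (v i)"
    and v_sub: "\<forall>i<n. submodular {..<m} (v i)"
    and c_nonneg: "\<forall>j<m. \<forall>T \<subseteq> {..<n}. c j T \<ge> 0"
    and c_empty: "\<forall>j<m. c j {} = 0"
    and c_mono: "\<forall>j<m. non_decreasing {..<n} (c j)"
    and c_avg: "\<forall>j<m. avg_decreasing \<alpha> {..<n} (c j)"
    and opt_alloc: "allocation n m Aopt"
    and opt: "\<forall>A. allocation n m A \<longrightarrow> social_cost n m v c Aopt \<le> social_cost n m v c A"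
  shows "social_cost n m v c (iacsm n m v c) \<le> 2 * \<alpha> ^ 3 * harm n * social_cost n m v c Aopt"
proof -
  interpret cost_sharing_instance n m \<alpha> v c Aopt
    using alpha v_mono v_sym v_sub c_nonneg c_empty c_mono c_avg opt_alloc
    by (rule cost_sharing_instance.intro)
  have "social_cost n m v c Aopt \<ge> 0" by (rule social_cost_opt_nonneg)
  moreover have "\<alpha> \<le> 2 * \<alpha> ^ 3"
    using power_increasing[of 1 3 \<alpha>] alpha by simp
  ultimately have "\<alpha> * harm n * social_cost n m v c Aopt \<le> 2 * \<alpha> ^ 3 * harm n * social_cost n m v c Aopt"
    using harm_nonneg[where 'a=real] by (intro mult_right_mono) simp_all
  then show ?thesis using iacsm_social_cost_le by linarith
qed

end
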